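(* If $p$ is prime, then $\operatorname{sf}(p-1)\equiv (p-1)!! \pmod p$.
   Context: For a natural number $n$, the double factorial $n!!$ is the product of the natural numbers less than or equal to $n$ that have the same parity as $n$. The superfactorial is $\operatorname{sf}(n)=\prod_{k=1}^{n} k!$. *)

theory Defs
  imports "HOL-Number_Theory.Number_Theory"
begin

definition double_factorial :: "nat \<Rightarrow> nat" where
  "double_factorial n = (\<Prod>k \<in> {k. 1 \<le> k \<and> k \<le> n \<and> even k = even n}. k)"

definition superfactorial :: "nat \<Rightarrow> nat" where
  "superfactorial n = (\<Prod>k = 1..n. fact k)"

end

theory Submission
  imports Defs
begin

text \<open>
  Write p = 2m + 1. Pairing the factors k! and (2m - k)! gives sf(2m) = m! \<Prod>{k! (2m - k)! | k < m},
  and Wilson's theorem shows k! (p - 1 - k)! \<equiv> (-1)^(k+1), so sf(2m) \<equiv> m! (-1)^(m(m+1)/2).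
  On the other side (2m)!! = 2^m m!, and Gauss's lemma for the residue 2 gives
  2^m \<equiv> (-1)^\<lceil>m/2\<rceil>, a sign of the same parity.
\<close>

lemma fact_mult_fact_reflect_cong:
  assumes "j \<le> n"
  shows "[fact (n - j) * fact j * (-1) ^ j = (fact n :: int)] (mod int (Suc n))"
  using assms
proof (induction j)
  case 0
  then show ?case by simp
next
  case (Suc j)
  let ?c = "fact (n - Suc j) * fact j * (-1) ^ j :: int"
  have "n - j = Suc (n - Suc j)"
    using Suc.prems by simp
  then have split: "(fact (n - j) :: int) = of_nat (n - j) * fact (n - Suc j)"
    by (metis fact_Suc)
  have "[- int (Suc j) = - int (Suc j) + int (Suc n)] (mod int (Suc n))"
    by (rule cong_sym, subst cong_add_lcancel_0) (simp add: cong_0_iff)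
  also have "- int (Suc j) + int (Suc n) = of_nat (n - j)"
    using Suc.prems by simp
  finally have "[?c * - int (Suc j) = ?c * of_nat (n - j)] (mod int (Suc n))"
    by (rule cong_scalar_left)
  moreover have "?c * - int (Suc j) = fact (n - Suc j) * fact (Suc j) * (-1) ^ Suc j"
    by (simp add: algebra_simps)
  moreover have "?c * of_nat (n - j) = fact (n - j) * fact j * (-1) ^ j"
    by (simp add: split algebra_simps)
  ultimately have "[fact (n - Suc j) * fact (Suc j) * (-1) ^ Suc j
                  = fact (n - j) * fact j * (-1 :: int) ^ j] (mod int (Suc n))"
    by simp
  with Suc show ?case
    by (meson Suc_leD cong_trans)
qed

lemma fact_mult_fact_complement_cong:
  assumes "prime p" and "k < p"
  shows "[fact k * fact (p - 1 - k) = (-1 :: int) ^ (p - k)] (mod int p)"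
proof -
  define j where "j = p - 1 - k"
  have p: "Suc (p - 1) = p" and k: "p - 1 - j = k" and pk: "p - k = Suc j"
    using assms prime_gt_0_nat[OF assms(1)] by (simp_all add: j_def)
  have "j \<le> p - 1"
    by (simp add: j_def)
  from fact_mult_fact_reflect_cong[OF this]
  have "[fact k * fact j * (-1) ^ j = (fact (p - 1) :: int)] (mod int p)"
    unfolding p k .
  also have "[fact (p - 1) = (-1 :: int)] (mod int p)"
    using wilson_theorem assms(1) by blast
  finally have "[fact k * fact j * (-1) ^ j * (-1) ^ j = (-1) * (-1 :: int) ^ j] (mod int p)"
    by (rule cong_scalar_right)
  moreover have "(-1 :: int) ^ j * (-1) ^ j = 1"
    by (simp flip: power_mult_distrib)
  ultimately show ?thesis
    by (simp add: pk mult.assoc j_def)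
qed

lemma prod_atMost_double_fold:
  fixes f :: "nat \<Rightarrow> 'a::comm_monoid_mult"
  shows "(\<Prod>k\<le>2*m. f k) = f m * (\<Prod>k<m. f k * f (2*m - k))"
proof -
  have "(\<Prod>k<m. f (2*m - k)) = (\<Prod>k\<in>{m<..2*m}. f k)"
    by (rule prod.reindex_bij_witness[where i="\<lambda>k. 2*m - k" and j="\<lambda>k. 2*m - k"]) auto
  moreover have "{..2*m} = insert m ({..<m} \<union> {m<..2*m})"
    by auto
  moreover have "prod f ({..<m} \<union> {m<..2*m}) = prod f {..<m} * prod f {m<..2*m}"
    by (rule prod.union_disjoint) auto
  ultimately show ?thesis
    by (simp add: prod.distrib)
qed

lemma prod_minus_one_power_Suc:
  "(\<Prod>k<m. (-1 :: 'a::comm_ring_1) ^ Suc k) = (-1) ^ (Suc m div 2)"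
proof (induction m)
  case 0
  then show ?case by simp
next
  case (Suc m)
  have "Suc m div 2 + Suc m = Suc (Suc m) div 2 + 2 * (Suc m div 2)"
    by linarith
  then have "(-1 :: 'a) ^ (Suc m div 2) * (-1) ^ Suc m
      = (-1) ^ (Suc (Suc m) div 2) * ((-1) ^ 2) ^ (Suc m div 2)"
    by (simp only: power_add [symmetric] power_mult [symmetric])
  then have "(-1 :: 'a) ^ (Suc m div 2) * (-1) ^ Suc m = (-1) ^ (Suc (Suc m) div 2)"
    by simp
  with Suc show ?case
    by simp
qed

lemma superfactorial_eq_prod_atMost: "superfactorial n = (\<Prod>k\<le>n. fact k)"
proof -
  have "{..n} = insert 0 {1..n}"
    by auto
  then show ?thesis
    by (simp add: superfactorial_def)
qed

lemma superfactorial_odd_prime_cong: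
  assumes "prime p" and p: "p = 2*m + 1"
  shows "[int (superfactorial (2*m)) = fact m * (-1) ^ (Suc m div 2)] (mod int p)"
proof -
  have "int (superfactorial (2*m)) = fact m * (\<Prod>k<m. fact k * fact (2*m - k))"
    by (simp add: superfactorial_eq_prod_atMost of_nat_prod prod_atMost_double_fold)
  also have "[\<dots> = fact m * (\<Prod>k<m. (-1) ^ Suc k)] (mod int p)"
  proof (intro cong_scalar_left cong_prod)
    fix k assume "k \<in> {..<m}"
    then have "k < p" and "p - 1 - k = 2*m - k" and "(-1 :: int) ^ (p - k) = (-1) ^ Suc k"
      using p by (auto simp: minus_one_power_iff)
    then show "[fact k * fact (2*m - k) = (-1 :: int) ^ Suc k] (mod int p)"
      using fact_mult_fact_complement_cong[OF assms(1)] by metis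
  qed
  finally show ?thesis
    by (simp only: prod_minus_one_power_Suc)
qed

lemma double_factorial_double: "double_factorial (2*m) = 2^m * fact m"
proof -
  have "{k. 1 \<le> k \<and> k \<le> 2*m \<and> even k = even (2*m)} = (\<lambda>j. 2*j) ` {1..m}"
    by (auto simp: image_iff elim!: evenE)
  then have "double_factorial (2*m) = (\<Prod>j\<in>{1..m}. 2*j)"
    by (simp add: double_factorial_def prod.reindex inj_on_def)
  also have "\<dots> = 2^m * fact m"
    by (simp add: prod.distrib fact_prod)
  finally show ?thesis .
qed

lemma two_power_half_prime_cong:
  assumes "prime p" and p: "p = 2*m + 1" and "0 < m"
  shows "[2 ^ m = (-1 :: int) ^ (Suc m div 2)] (mod int p)"
proof -
  interpret GAUSS p 2
  proof
    show "prime p" by fact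
    show "2 < p" using assms by simp
    show "[2 \<noteq> 0] (mod int p)" using assms by (simp add: cong_def)
    show "(0::int) < 2" by simp
  qed
  have half: "(int p - 1) div 2 = int m"
    using p by simp
  have "\<And>x. x \<in> {0<..int m} \<Longrightarrow> (x * 2) mod int p = x * 2"
    using p by (auto intro!: mod_pos_pos_trivial)
  then have "C = (\<lambda>x. x * 2) ` {0<..int m}"
    unfolding C_def B_def A_def half by (auto simp: image_iff)
  then have "E = (\<lambda>x. x * 2) ` {int (m div 2)<..int m}"
    unfolding E_def half by (auto simp: image_iff)
  then have "card E = Suc m div 2"
    by (simp add: card_image inj_on_def)
  then show ?thesis
    using pre_gauss_lemma half by simp
qed

theorem theorem5:
  fixes p :: nat
  assumes "prime p"
  shows "[superfactorial (p - 1) = double_factorial (p - 1)] (mod p)"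
proof (cases "p = 2")
  case True
  have "{k. 1 \<le> k \<and> k \<le> (1::nat) \<and> odd k} = {1}"
    by auto
  then show ?thesis
    using True by (simp add: superfactorial_def double_factorial_def)
next
  case False
  then obtain m where p: "p = 2*m + 1"
    using assms prime_odd_nat prime_ge_2_nat by (metis le_neq_implies_less oddE)
  then have "0 < m"
    using assms by (cases m) auto
  have "[int (superfactorial (2*m)) = fact m * (-1) ^ (Suc m div 2)] (mod int p)"
    using superfactorial_odd_prime_cong[OF assms p] .
  also have "[fact m * (-1) ^ (Suc m div 2) = fact m * (2 :: int) ^ m] (mod int p)"
    using two_power_half_prime_cong[OF assms p \<open>0 < m\<close>] by (simp add: cong_sym cong_scalar_left)
  also have "fact m * (2 :: int) ^ m = int (double_factorial (2*m))"
    by (simp add: double_factorial_double)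
  finally have "[int (superfactorial (2*m)) = int (double_factorial (2*m))] (mod int p)" .
  moreover have "p - 1 = 2*m"
    using p by simp
  ultimately show ?thesis
    by (simp only: cong_int_iff)
qed

end
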